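(* Let $\mathfrak{C}=(U,M,I,N,J)$ be a formal decision context. Then the set of necessary I-decision rules of $\mathfrak{C}$ is $$\overline{\mathfrak{R}}_{I}(\mathfrak{C})=\{(\cup [O]_{R_1},(\cup [O]_{R_1})^{\square_M})\rightarrow(O^{\uparrow_N\downarrow_N},O^{\uparrow_N})\mid O\in \mathrm{Ext}L_O(\mathfrak{C}_M),\ O\neq\emptyset,\ O^{\uparrow_N\downarrow_N}\neq U\}.$$
   Context: Formal context $(U,M,I)$: $U$ and $M$ are finite nonempty sets and $I\subseteq U\times M$. For $O\subseteq U$ and $C\subseteq M$ define: - $O^{\uparrow}=\{a\in M\mid \forall x\in O\,((x,a)\in I)\}$ and $C^{\downarrow}=\{x\in U\mid \forall a\in C\,((x,a)\in I)\}$; - $O^{\square}=\{a\in M\mid \forall x\in U\,((x,a)\in I\Rightarrow x\in O)\}$ and $C^{\lozenge}=\{x\in U\mid \exists a\in C\,((x,a)\in I)\}$. A formal concept is a pair $(O,C)$ with $O^\uparrow=C$ and $C^\downarrow=O$ (set $L$). An object-oriented concept is a pair $(O,C)$ with $O^\square=C$ and $C^\lozenge=O$ (set $L_O$). $\mathrm{Ext}$ denotes the set of extents (first components). Standing assumption: contexts are canonical, i.e. for all $x\in U$ and $a\in M$ we have $\{x\}^\uparrow\notin\{\emptyset,M\}$ and $\{a\}^\downarrow\notin\{\emptyset,U\}$. A formal decision context $\mathfrak{C}=(U,M,I,N,J)$ has conditional context $\mathfrak{C}_M=(U,M,I)$ and decision context $\mathfrak{C}_N=(U,N,J)$, with $M\cap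 N=\emptyset$. Operators carry the subscript $M$ or $N$ according to the context in which they are computed. An I-decision rule is $(O,C)\rightarrow(Y,D)$ with $(O,C)\in L_O(\mathfrak{C}_M)$, $(Y,D)\in L(\mathfrak{C}_N)$, $O\subseteq Y$, $O\ne\emptyset$ and $Y\ne U$; the set of these is $\mathfrak{R}_I(\mathfrak{C})$. Implication: $(O_1,C_1)\rightarrow(Y_1,D_1)\Rightarrow(O_2,C_2)\rightarrow(Y_2,D_2)$ iff $O_2\subseteq O_1\subseteq Y_1\subseteq Y_2$. A rule $r$ is necessary if there is no $r_1\in\mathfrak{R}_I(\mathfrak{C})$ with $r_1\neq r$ and $r_1\Rightarrow r$. $R_1$ is the equivalence relation on $\mathrm{Ext}L_O(\mathfrak{C}_M)$ given by $(O,Y)\in R_1$ iff $O^{\uparrow_N}=Y^{\uparrow_N}$. $[O]_{R_1}$ is the class of $O$, and $\cup[O]_{R_1}$ is the union of its members. *)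

theory Defs
  imports Main
begin

definition up :: "'m set \<Rightarrow> ('u \<times> 'm) set \<Rightarrow> 'u set \<Rightarrow> 'm set" where
  "up M I X = {a \<in> M. \<forall>x\<in>X. (x, a) \<in> I}"

definition down :: "'u set \<Rightarrow> ('u \<times> 'm) set \<Rightarrow> 'm set \<Rightarrow> 'u set" where
  "down U I C = {x \<in> U. \<forall>a\<in>C. (x, a) \<in> I}"

definition box :: "'u set \<Rightarrow> 'm set \<Rightarrow> ('u \<times> 'm) set \<Rightarrow> 'u set \<Rightarrow> 'm set" where
  "box U M I X = {a \<in> M. \<forall>x\<in>U. (x, a) \<in> I \<longrightarrow> x \<in> X}"

definition dia :: "'u set \<Rightarrow> ('u \<times> 'm) set \<Rightarrow> 'm set \<Rightarrow> 'u set" where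
  "dia U I C = {x \<in> U. \<exists>a\<in>C. (x, a) \<in> I}"

definition formal_context :: "'u set \<Rightarrow> 'm set \<Rightarrow> ('u \<times> 'm) set \<Rightarrow> bool" where
  "formal_context U M I \<longleftrightarrow> finite U \<and> finite M \<and> U \<noteq> {} \<and> M \<noteq> {} \<and> I \<subseteq> U \<times> M"

definition canonical :: "'u set \<Rightarrow> 'm set \<Rightarrow> ('u \<times> 'm) set \<Rightarrow> bool" where
  "canonical U M I \<longleftrightarrow>
     (\<forall>x\<in>U. up M I {x} \<noteq> {} \<and> up M I {x} \<noteq> M) \<and>
     (\<forall>a\<in>M. down U I {a} \<noteq> {} \<and> down U I {a} \<noteq> U)"

definition concepts :: "'u set \<Rightarrow> 'm set \<Rightarrow> ('u \<times> 'm) set \<Rightarrow> ('u set \<times> 'm set) set" where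
  "concepts U M I = {(X, C). up M I X = C \<and> down U I C = X}"

definition oo_concepts :: "'u set \<Rightarrow> 'm set \<Rightarrow> ('u \<times> 'm) set \<Rightarrow> ('u set \<times> 'm set) set" where
  "oo_concepts U M I = {(X, C). box U M I X = C \<and> dia U I C = X}"

definition Ext :: "('u set \<times> 'm set) set \<Rightarrow> 'u set set" where
  "Ext L = fst ` L"

text \<open>Conditional attributes have type 'm, decision attributes type 'n;
  the two attribute sets are therefore disjoint by typing.\<close>
definition formal_decision_context ::
  "'u set \<Rightarrow> 'm set \<Rightarrow> ('u \<times> 'm) set \<Rightarrow> 'n set \<Rightarrow> ('u \<times> 'n) set \<Rightarrow> bool" where
  "formal_decision_context U M I N J \<longleftrightarrow>
     formal_context U M I \<and> formal_context U N J \<and> canonical U M I \<and> canonical U N J"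

text \<open>A rule (X,C) \<rightarrow> (Y,D) is represented as the pair ((X,C),(Y,D)).\<close>
type_synonym ('u, 'm, 'n) rule = "('u set \<times> 'm set) \<times> ('u set \<times> 'n set)"

definition I_rules ::
  "'u set \<Rightarrow> 'm set \<Rightarrow> ('u \<times> 'm) set \<Rightarrow> 'n set \<Rightarrow> ('u \<times> 'n) set \<Rightarrow> ('u, 'm, 'n) rule set" where
  "I_rules U M I N J = {((X, C), (Y, D)).
      (X, C) \<in> oo_concepts U M I \<and> (Y, D) \<in> concepts U N J \<and> X \<subseteq> Y \<and> X \<noteq> {} \<and> Y \<noteq> U}"

definition rule_implies :: "('u, 'm, 'n) rule \<Rightarrow> ('u, 'm, 'n) rule \<Rightarrow> bool" where
  "rule_implies r1 r2 \<longleftrightarrow>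
     (case r1 of ((X1, C1), (Y1, D1)) \<Rightarrow> case r2 of ((X2, C2), (Y2, D2)) \<Rightarrow>
        X2 \<subseteq> X1 \<and> X1 \<subseteq> Y1 \<and> Y1 \<subseteq> Y2)"

definition necessary_I_rules ::
  "'u set \<Rightarrow> 'm set \<Rightarrow> ('u \<times> 'm) set \<Rightarrow> 'n set \<Rightarrow> ('u \<times> 'n) set \<Rightarrow> ('u, 'm, 'n) rule set" where
  "necessary_I_rules U M I N J = {r \<in> I_rules U M I N J.
      \<not> (\<exists>r1 \<in> I_rules U M I N J. r1 \<noteq> r \<and> rule_implies r1 r)}"

definition R1_class ::
  "'u set \<Rightarrow> 'm set \<Rightarrow> ('u \<times> 'm) set \<Rightarrow> 'n set \<Rightarrow> ('u \<times> 'n) set \<Rightarrow> 'u set \<Rightarrow> 'u set set" where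
  "R1_class U M I N J X = {Y \<in> Ext (oo_concepts U M I). up N J X = up N J Y}"

end

theory Submission
  imports Defs
begin

text \<open>For an object-oriented extent \<open>X\<close> let \<open>S\<close> be its \<open>R\<^sub>1\<close>-class. Object-oriented extents
  are closed under unions, so \<open>\<Union>S\<close> is the largest extent with the same decision intent
  \<open>X\<^sup>\<up>\<close>, and it lies below the decision extent \<open>X\<^sup>\<up>\<^sup>\<down>\<close>. Hence the rule
  \<open>\<Union>S \<rightarrow> X\<^sup>\<up>\<^sup>\<down>\<close> implies every I-decision rule with premise \<open>X\<close>, so every
  necessary rule has this form. Conversely, any rule \<open>X\<^sub>1 \<rightarrow> Y\<^sub>1\<close> implying it is squeezed
  between \<open>\<Union>S \<subseteq> X\<^sub>1 \<subseteq> Y\<^sub>1 \<subseteq> X\<^sup>\<up>\<^sup>\<down>\<close>, which forces \<open>X\<^sub>1\<^sup>\<up> = Y\<^sub>1\<^sup>\<up> = X\<^sup>\<up>\<close>, so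
  \<open>X\<^sub>1 \<in> S\<close> and the two rules coincide. None of this needs finiteness or canonicity.\<close>

lemma oo_extent_iff: "X \<in> Ext (oo_concepts U M I) \<longleftrightarrow> dia U I (box U M I X) = X"
  unfolding Ext_def oo_concepts_def by (auto simp: image_iff)

lemma oo_concept_extent: "(X, C) \<in> oo_concepts U M I \<Longrightarrow> X \<in> Ext (oo_concepts U M I)"
  using image_eqI[of X fst "(X, C)"] unfolding Ext_def by simp

lemma oo_concept_box:
  assumes "X \<in> Ext (oo_concepts U M I)"
  shows "(X, box U M I X) \<in> oo_concepts U M I"
  using assms[unfolded oo_extent_iff] by (simp add: oo_concepts_def)

lemma oo_extent_subset: "X \<in> Ext (oo_concepts U M I) \<Longrightarrow> X \<subseteq> U"
  unfolding oo_extent_iff dia_def by blast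

lemma Union_oo_extents:
  assumes "S \<subseteq> Ext (oo_concepts U M I)"
  shows "\<Union>S \<in> Ext (oo_concepts U M I)"
proof -
  have "\<Union>S \<subseteq> dia U I (box U M I (\<Union>S))"
  proof
    fix x assume "x \<in> \<Union>S"
    then obtain Y where "Y \<in> S" "x \<in> Y" by blast
    then have "x \<in> dia U I (box U M I Y)" using assms by (simp add: oo_extent_iff subset_iff)
    moreover have "box U M I Y \<subseteq> box U M I (\<Union>S)" using \<open>Y \<in> S\<close> unfolding box_def by blast
    ultimately show "x \<in> dia U I (box U M I (\<Union>S))" unfolding dia_def by blast
  qed
  moreover have "dia U I (box U M I (\<Union>S)) \<subseteq> \<Union>S" unfolding dia_def box_def by blast
  ultimately show ?thesis unfolding oo_extent_iff by blast
qed

lemma up_antimono: "X \<subseteq> Y \<Longrightarrow> up N J Y \<subseteq> up N J X"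
  unfolding up_def by blast

lemma down_antimono: "C \<subseteq> D \<Longrightarrow> down U J D \<subseteq> down U J C"
  unfolding down_def by blast

lemma subset_down_up: "X \<subseteq> U \<Longrightarrow> X \<subseteq> down U J (up N J X)"
  unfolding up_def down_def by blast

lemma up_down_up: "X \<subseteq> U \<Longrightarrow> up N J (down U J (up N J X)) = up N J X"
  unfolding up_def down_def by blast

lemma concept_down_up: "X \<subseteq> U \<Longrightarrow> (down U J (up N J X), up N J X) \<in> concepts U N J"
  unfolding concepts_def by (simp add: up_down_up)

lemma down_up_subset_extent:
  assumes "(Y, D) \<in> concepts U N J" "X \<subseteq> Y"
  shows "down U J (up N J X) \<subseteq> Y"
proof -
  have "down U J (up N J X) \<subseteq> down U J (up N J Y)" by (intro down_antimono up_antimono) fact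
  also have "\<dots> = Y" using assms(1) unfolding concepts_def by simp
  finally show ?thesis .
qed

lemma up_eq_between_down_up:
  assumes "X \<subseteq> U" "up N J X' = up N J X" "X' \<subseteq> Z" "Z \<subseteq> down U J (up N J X)"
  shows "up N J Z = up N J X"
proof (rule antisym)
  show "up N J Z \<subseteq> up N J X" using up_antimono[OF \<open>X' \<subseteq> Z\<close>, of N J] assms(2) by simp
  show "up N J X \<subseteq> up N J Z"
    using up_antimono[OF \<open>Z \<subseteq> _\<close>, of N J] up_down_up[OF \<open>X \<subseteq> U\<close>, of N J] by simp
qed

lemma R1_class_subset: "R1_class U M I N J X \<subseteq> Ext (oo_concepts U M I)"
  unfolding R1_class_def by blast

lemma self_in_R1_class: "X \<in> Ext (oo_concepts U M I) \<Longrightarrow> X \<in> R1_class U M I N J X"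
  unfolding R1_class_def by simp

lemma Union_R1_class_extent: "\<Union>(R1_class U M I N J X) \<in> Ext (oo_concepts U M I)"
  by (rule Union_oo_extents[OF R1_class_subset])

lemma up_Union_R1_class:
  assumes "X \<in> Ext (oo_concepts U M I)"
  shows "up N J (\<Union>(R1_class U M I N J X)) = up N J X"
  using self_in_R1_class[OF assms] unfolding R1_class_def up_def by blast

lemma Union_R1_class_subset_down_up:
  assumes "X \<in> Ext (oo_concepts U M I)"
  shows "\<Union>(R1_class U M I N J X) \<subseteq> down U J (up N J X)"
  using subset_down_up[OF oo_extent_subset[OF Union_R1_class_extent]] up_Union_R1_class[OF assms]
  by metis

definition class_rule ::
  "'u set \<Rightarrow> 'm set \<Rightarrow> ('u \<times> 'm) set \<Rightarrow> 'n set \<Rightarrow> ('u \<times> 'n) set \<Rightarrow> 'u set \<Rightarrow> ('u, 'm, 'n) rule"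
  where "class_rule U M I N J X =
    ((\<Union>(R1_class U M I N J X), box U M I (\<Union>(R1_class U M I N J X))),
     (down U J (up N J X), up N J X))"

lemma class_rule_in_I_rules:
  assumes "X \<in> Ext (oo_concepts U M I)" "X \<noteq> {}" "down U J (up N J X) \<noteq> U"
  shows "class_rule U M I N J X \<in> I_rules U M I N J"
  using oo_concept_box[OF Union_R1_class_extent] concept_down_up[OF oo_extent_subset[OF assms(1)]]
    Union_R1_class_subset_down_up[OF assms(1)] self_in_R1_class[OF assms(1)] assms(2,3)
  unfolding class_rule_def I_rules_def by blast

lemma class_rule_implies_I_rule:
  assumes "((X, C), (Y, D)) \<in> I_rules U M I N J"
  shows "X \<in> Ext (oo_concepts U M I)" "X \<noteq> {}" "down U J (up N J X) \<noteq> U"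
    and "rule_implies (class_rule U M I N J X) ((X, C), (Y, D))"
proof -
  have oo: "(X, C) \<in> oo_concepts U M I" and concept: "(Y, D) \<in> concepts U N J"
    and "X \<subseteq> Y" "Y \<noteq> U" and "X \<noteq> {}"
    using assms unfolding I_rules_def by simp_all
  show X: "X \<in> Ext (oo_concepts U M I)" by (rule oo_concept_extent[OF oo])
  show "X \<noteq> {}" by fact
  from concept \<open>X \<subseteq> Y\<close> have below: "down U J (up N J X) \<subseteq> Y" by (rule down_up_subset_extent)
  moreover have "Y \<subseteq> U" using concept unfolding concepts_def down_def by blast
  ultimately show "down U J (up N J X) \<noteq> U" using \<open>Y \<noteq> U\<close> by blast
  show "rule_implies (class_rule U M I N J X) ((X, C), (Y, D))"
    using self_in_R1_class[OF X, of N J] Union_R1_class_subset_down_up[OF X, of N J] below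
    unfolding class_rule_def rule_implies_def by auto
qed

lemma rule_implies_class_rule_eq:
  assumes X: "X \<in> Ext (oo_concepts U M I)"
    and r1: "((X1, C1), (Y1, D1)) \<in> I_rules U M I N J"
    and imp: "rule_implies ((X1, C1), (Y1, D1)) (class_rule U M I N J X)"
  shows "((X1, C1), (Y1, D1)) = class_rule U M I N J X"
proof -
  let ?S = "R1_class U M I N J X"
  have chain: "\<Union>?S \<subseteq> X1" "X1 \<subseteq> Y1" "Y1 \<subseteq> down U J (up N J X)"
    using imp unfolding class_rule_def rule_implies_def by simp_all
  have XU: "X \<subseteq> U" by (rule oo_extent_subset[OF X])
  note up_squeezed = up_eq_between_down_up[OF XU up_Union_R1_class[OF X]]
  have upX1: "up N J X1 = up N J X" using up_squeezed chain by blast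
  have upY1: "up N J Y1 = up N J X" using up_squeezed chain by blast
  have oo1: "(X1, C1) \<in> oo_concepts U M I" and c1: "(Y1, D1) \<in> concepts U N J"
    using r1 unfolding I_rules_def by simp_all
  then have C1: "C1 = box U M I X1" and D1: "D1 = up N J Y1" and Y1: "Y1 = down U J D1"
    unfolding oo_concepts_def concepts_def by simp_all
  have X1: "X1 \<in> Ext (oo_concepts U M I)" by (rule oo_concept_extent[OF oo1])
  have "X1 \<in> ?S" using X1 upX1 unfolding R1_class_def by simp
  then have "X1 = \<Union>?S" using chain(1) by blast
  moreover have "D1 = up N J X" using D1 upY1 by simp
  ultimately show ?thesis using C1 Y1 unfolding class_rule_def by simp
qed

lemma necessary_I_rules_eq_class_rules:
  "necessary_I_rules U M I N J = {class_rule U M I N J X | X.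
     X \<in> Ext (oo_concepts U M I) \<and> X \<noteq> {} \<and> down U J (up N J X) \<noteq> U}"
  (is "?A = ?B")
proof
  show "?A \<subseteq> ?B"
  proof
    fix r assume "r \<in> ?A"
    then have rI: "r \<in> I_rules U M I N J"
      and minimal: "\<And>r1. r1 \<in> I_rules U M I N J \<Longrightarrow> rule_implies r1 r \<Longrightarrow> r1 = r"
      unfolding necessary_I_rules_def by blast+
    obtain X C Y D where rXY: "r = ((X, C), (Y, D))" by (metis prod.collapse)
    note class_rule = class_rule_implies_I_rule[OF rI[unfolded rXY]]
    have "class_rule U M I N J X \<in> I_rules U M I N J"
      using class_rule(1-3) by (rule class_rule_in_I_rules)
    then have "class_rule U M I N J X = r" using minimal class_rule(4) rXY by simp
    with class_rule(1-3) show "r \<in> ?B" by blast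
  qed
  show "?B \<subseteq> ?A"
  proof
    fix r assume "r \<in> ?B"
    then obtain X where X: "X \<in> Ext (oo_concepts U M I)" "X \<noteq> {}" "down U J (up N J X) \<noteq> U"
      and r: "r = class_rule U M I N J X" by blast
    have "r1 = r" if "r1 \<in> I_rules U M I N J" "rule_implies r1 r" for r1
      using that rule_implies_class_rule_eq[OF X(1)] unfolding r by (metis prod.collapse)
    with class_rule_in_I_rules[OF X] show "r \<in> ?A" unfolding r necessary_I_rules_def by blast
  qed
qed

theorem theorem3p5:
  fixes U :: "'u set" and M :: "'m set" and I :: "('u \<times> 'm) set"
    and N :: "'n set" and J :: "('u \<times> 'n) set"
  assumes "formal_decision_context U M I N J"
  shows "necessary_I_rules U M I N J =
    {((\<Union>(R1_class U M I N J X), box U M I (\<Union>(R1_class U M I N J X))),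
      (down U J (up N J X), up N J X)) | X.
       X \<in> Ext (oo_concepts U M I) \<and> X \<noteq> {} \<and> down U J (up N J X) \<noteq> U}"
  using necessary_I_rules_eq_class_rules unfolding class_rule_def .

end
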